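(* Given an episodic MDP and a general preference $M$, construct the two-player zero-sum Markov game consisting of two independent copies of the MDP, where player $i\in\{1,2\}$ controls the $i$-th copy, with payoff $r(\tau,\tau')=M[\tau,\tau']$ for the pair of trajectories $(\tau,\tau')$ of the two copies (player 1 maximizes, player 2 minimizes). If $(\mu^\star,\nu^\star)\in\Pi_1\times\Pi_2$ is a restricted Nash equilibrium of this game, i.e. $\mu^\star\in\arg\max_{\mu\in\Pi_1}\mathbb{E}_{\tau\sim\mu,\tau'\sim\nu^\star}[M[\tau,\tau']]$ and $\nu^\star\in\arg\min_{\nu\in\Pi_2}\mathbb{E}_{\tau\sim\mu^\star,\tau'\sim\nu}[M[\tau,\tau']]$, then both $\mu^\star$ and $\nu^\star$ are von Neumann winners of the original problem.
   Context: Episodic MDP $(H,\mathcal{S},\mathcal{A},\mathbb{P})$; trajectories $\tau\in(\mathcal{S}\times\mathcal{A})^H$; policies are general (may depend on the whole history, randomized). General preference: $M[\tau,\tau']=\Pr[\tau\succ\tau']\in[0,1]$, with $M[\tau,\tau']+M[\tau',\tau]=1$, so the game below is constant-sum. $\Pi_i$ is the set of policies of player $i$ that map the player's own partial trajectory $(s^{(i)}_1,a^{(i)}_1,\dots,s^{(i)}_h)$ in its copy to a distribution over actions; it coincides with the set of all general policies of the original MDP. A policy $\pi^\star$ is a von Neumann winner if $(\pi^\star,\pi^\star)$ is a symmetric Nash equilibrium of the constant-sum game $\max_\pi\min_{\pi'}\mathbb{E}_{\tau\sim\pi,\tau'\sim\pi'}M[\tau,\tau']$. *)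

theory Defs
  imports "HOL-Probability.Probability"
begin

text \<open>Episodic MDP: initial state distribution init, time-indexed transition kernel
  P h s a (distribution of the state at step h+1 given state s and action a at step h),
  horizon H.
  A general (history-dependent, randomized) policy maps the partial trajectory
  (s_1,a_1,...,s_{h-1},a_{h-1}) together with the current state s_h to a distribution
  over actions.\<close>

type_synonym ('s,'a) traj = "('s \<times> 'a) list"
type_synonym ('s,'a) policy = "('s \<times> 'a) list \<Rightarrow> 's \<Rightarrow> 'a pmf"

fun traj_dist :: "'s pmf \<Rightarrow> (nat \<Rightarrow> 's \<Rightarrow> 'a \<Rightarrow> 's pmf) \<Rightarrow> ('s,'a) policy \<Rightarrow> nat
    \<Rightarrow> ('s,'a) traj pmf" where
  "traj_dist init P pol 0 = return_pmf []"
| "traj_dist init P pol (Suc n) =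
     bind_pmf (traj_dist init P pol n) (\<lambda>hist.
       bind_pmf (if hist = [] then init
                 else P (length hist) (fst (last hist)) (snd (last hist))) (\<lambda>s.
         map_pmf (\<lambda>a. hist @ [(s, a)]) (pol hist s)))"

definition pref_value :: "'s pmf \<Rightarrow> (nat \<Rightarrow> 's \<Rightarrow> 'a \<Rightarrow> 's pmf) \<Rightarrow> nat
    \<Rightarrow> (('s,'a) traj \<Rightarrow> ('s,'a) traj \<Rightarrow> real) \<Rightarrow> ('s,'a) policy \<Rightarrow> ('s,'a) policy \<Rightarrow> real" where
  "pref_value init P H M p q =
     measure_pmf.expectation (pair_pmf (traj_dist init P p H) (traj_dist init P q H))
       (\<lambda>(t, t'). M t t')"

definition von_neumann_winner :: "'s pmf \<Rightarrow> (nat \<Rightarrow> 's \<Rightarrow> 'a \<Rightarrow> 's pmf) \<Rightarrow> nat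
    \<Rightarrow> (('s,'a) traj \<Rightarrow> ('s,'a) traj \<Rightarrow> real) \<Rightarrow> ('s,'a) policy \<Rightarrow> bool" where
  "von_neumann_winner init P H M p \<longleftrightarrow>
     (\<forall>q. pref_value init P H M q p \<le> pref_value init P H M p p) \<and>
     (\<forall>q. pref_value init P H M p p \<le> pref_value init P H M p q)"

end

theory Submission
  imports Defs
begin

text \<open>Swapping the two players turns the preference game into itself with payoff
  1 - M, so every policy ties with itself and the game has value 1/2.  A saddle
  point (mu, nu) therefore has value 1/2 as well: mu wins with probability at least
  1/2 against every opponent and nu loses with probability at most 1/2 against every
  opponent, and by the constant sum the same holds with the roles of the two
  players exchanged, which is exactly the von Neumann winner property.\<close>

lemma length_traj_dist:
  "t \<in> set_pmf (traj_dist init P pol n) \<Longrightarrow> length t = n"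
proof (induction n arbitrary: t)
  case (Suc n)
  from Suc.prems obtain h s a
    where "h \<in> set_pmf (traj_dist init P pol n)" and "t = h @ [(s, a)]"
    by (auto split: if_splits)
  with Suc.IH show ?case by simp
qed simp

lemma expectation_pair_pmf_constant_sum:
  fixes M :: "'a \<Rightarrow> 'a \<Rightarrow> real"
  assumes "set_pmf A \<subseteq> S" and "set_pmf B \<subseteq> S"
    and bounded: "\<And>t t'. t \<in> S \<Longrightarrow> t' \<in> S \<Longrightarrow> \<bar>M t t'\<bar> \<le> K"
    and constant_sum: "\<And>t t'. t \<in> S \<Longrightarrow> t' \<in> S \<Longrightarrow> M t t' + M t' t = c"
  shows "measure_pmf.expectation (pair_pmf A B) (\<lambda>(t, t'). M t t')
       + measure_pmf.expectation (pair_pmf B A) (\<lambda>(t, t'). M t t') = c"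
proof -
  let ?AB = "measure_pmf (pair_pmf A B)"
  have support: "\<And>t t'. (t, t') \<in> set_pmf (pair_pmf A B) \<Longrightarrow> t \<in> S \<and> t' \<in> S"
    using assms(1,2) by auto
  have "measure_pmf.expectation (pair_pmf B A) (\<lambda>(t, t'). M t t')
      = measure_pmf.expectation (pair_pmf A B) (\<lambda>(t, t'). M t' t)"
    by (simp add: pair_commute_pmf[of B A] case_prod_unfold)
  moreover have "integrable ?AB (\<lambda>(t, t'). M t t')" "integrable ?AB (\<lambda>(t, t'). M t' t)"
    by (auto intro!: measure_pmf.integrable_const_bound[where B = K] AE_pmfI bounded
             dest!: support)
  moreover have "measure_pmf.expectation (pair_pmf A B) (\<lambda>(t, t'). M t t' + M t' t) = c"
    by (subst integral_cong_AE[where g = "\<lambda>_. c"])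
       (auto intro!: AE_pmfI constant_sum dest!: support)
  ultimately show ?thesis
    by (simp add: case_prod_unfold)
qed

lemma pref_value_constant_sum:
  assumes "\<And>t t'. length t = H \<Longrightarrow> length t' = H \<Longrightarrow> 0 \<le> M t t' \<and> M t t' \<le> 1"
    and "\<And>t t'. length t = H \<Longrightarrow> length t' = H \<Longrightarrow> M t t' + M t' t = 1"
  shows "pref_value init P H M p q + pref_value init P H M q p = 1"
  unfolding pref_value_def
  by (rule expectation_pair_pmf_constant_sum[where S = "{t. length t = H}" and K = 1])
     (use assms in \<open>auto dest: length_traj_dist\<close>)

lemma constant_sum_saddle_point_symmetric:
  fixes V :: "'p \<Rightarrow> 'p \<Rightarrow> real"
  assumes constant_sum: "\<And>p q. V p q + V q p = 1"
    and x_best: "\<forall>p. V p y \<le> V x y"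
    and y_best: "\<forall>q. V x y \<le> V x q"
  shows "(\<forall>q. V q x \<le> V x x) \<and> (\<forall>q. V x x \<le> V x q)
       \<and> (\<forall>q. V q y \<le> V y y) \<and> (\<forall>q. V y y \<le> V y q)"
proof -
  have self_tie: "V p p = 1/2" for p
    using constant_sum[of p p] by linarith
  have "V x y \<le> V x x" "V y y \<le> V x y"
    using x_best y_best by blast+
  then have saddle_value: "V x y = 1/2"
    using self_tie[of x] self_tie[of y] by linarith
  have "1/2 \<le> V x q" "V q y \<le> 1/2" for q
    using x_best y_best saddle_value by auto
  moreover have "V q x = 1 - V x q" "V y q = 1 - V q y" for q
    using constant_sum by (metis add.commute eq_diff_eq)+
  ultimately show ?thesis
    unfolding self_tie by auto
qed

theorem proposition4:
  fixes init :: "'s pmf" and P :: "nat \<Rightarrow> 's \<Rightarrow> 'a \<Rightarrow> 's pmf" and H :: nat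
    and M :: "('s,'a) traj \<Rightarrow> ('s,'a) traj \<Rightarrow> real"
    and mu nu :: "('s,'a) policy"
  assumes M_range: "\<And>t t'. length t = H \<Longrightarrow> length t' = H \<Longrightarrow> 0 \<le> M t t' \<and> M t t' \<le> 1"
    and M_antisym: "\<And>t t'. length t = H \<Longrightarrow> length t' = H \<Longrightarrow> M t t' + M t' t = 1"
    and mu_best: "\<forall>mu'. pref_value init P H M mu' nu \<le> pref_value init P H M mu nu"
    and nu_best: "\<forall>nu'. pref_value init P H M mu nu \<le> pref_value init P H M mu nu'"
  shows "von_neumann_winner init P H M mu \<and> von_neumann_winner init P H M nu"
  using constant_sum_saddle_point_symmetric[OF pref_value_constant_sum[OF M_range M_antisym]
      mu_best nu_best]
  unfolding von_neumann_winner_def by blast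

end
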